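(* For all $n\in\mathbb N$ the following hold in the $q$-shuffle algebra $\mathbb V$: $$xC_n=(-1)^nq^{-n}\sum_{i=0}^n W_{-i}\star D_{n-i}=(-1)^nq^{n}\sum_{i=0}^n D_{n-i}\star W_{-i},$$ $$C_ny=(-1)^nq^{-n}\sum_{i=0}^n D_{n-i}\star W_{i+1}=(-1)^nq^{n}\sum_{i=0}^n W_{i+1}\star D_{n-i}.$$ Here $xC_n$ and $C_ny$ denote concatenation products in the free algebra.
   Context: Let $\mathbb F$ be a field and let $q\in\mathbb F$ be nonzero and not a root of unity. Let $[m]_q=(q^m-q^{-m})/(q-q^{-1})$. Let $\mathbb V$ be the free associative $\mathbb F$-algebra on noncommuting $x,y$, with basis the words (including $1$). Juxtaposition denotes concatenation. Set $\langle x,x\rangle=\langle y,y\rangle=2$ and $\langle x,y\rangle=\langle y,x\rangle=-2$. The $q$-shuffle product $\star$ is the bilinear product determined as follows: - $1\star v=v\star 1=v$; - for nontrivial words $u=u_1\cdots u_r$ and $v=v_1\cdots v_s$, $$u\star v=u_1((u_2\cdots u_r)\star v)+v_1(u\star(v_2\cdots v_s))q^{\langle u_1,v_1\rangle+\cdots+\langle u_r,v_1\rangle}.$$ This makes $\mathbb V$ an associative algebra, the $q$-shuffle algebra. For $k\in\mathbb N$: - $W_{-k}=xyx\cdots x$ is the alternating word of length $2k+1$ beginning and ending with $x$; - $W_{k+1}=yxy\cdots y$ is the alternating word of length $2k+1$ beginning and ending with $y$; - $\tilde G_k=xyxy\cdots xy$ is the word of length $2k$, with $\tilde G_0=1$.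 Define $D_0=1$ and, for $n\ge1$, define $D_n$ recursively by $\sum_{i=0}^n D_i\star\tilde G_{n-i}=0$. Let $\overline x=1$ and $\overline y=-1$. A word $v_1\cdots v_m$ is Catalan if $\overline v_1+\cdots+\overline v_i\ge0$ for $1\le i\le m-1$ and $\overline v_1+\cdots+\overline v_m=0$. For $n\in\mathbb N$, $$C_n=\sum v_1v_2\cdots v_{2n}\,[1]_q[1+\overline v_1]_q[1+\overline v_1+\overline v_2]_q\cdots[1+\overline v_1+\cdots+\overline v_{2n}]_q,$$ where the sum is over all Catalan words $v_1\cdots v_{2n}$ of length $2n$ (so $C_0=1$). *)

theory Defs
  imports Main
begin

datatype letter = X | Y

text \<open>Elements of V are represented by their coefficient functions on words.
  The genuine algebra V consists of the finitely supported ones; all operations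
  below are the (bi)linear extensions of the operations on words.\<close>
type_synonym 'a vec = "letter list \<Rightarrow> 'a"

definition wd :: "letter list \<Rightarrow> 'a::field vec" where
  "wd u = (\<lambda>w. if w = u then 1 else 0)"

definition lcat :: "letter \<Rightarrow> 'a::field vec \<Rightarrow> 'a vec" where
  "lcat c f = (\<lambda>w. case w of [] \<Rightarrow> 0 | d # w' \<Rightarrow> if d = c then f w' else 0)"

definition rcat :: "'a::field vec \<Rightarrow> letter \<Rightarrow> 'a vec" where
  "rcat f c = (\<lambda>w. if w \<noteq> [] \<and> last w = c then f (butlast w) else 0)"

definition smul :: "'a::field \<Rightarrow> 'a vec \<Rightarrow> 'a vec" where
  "smul a f = (\<lambda>w. a * f w)"

fun pair :: "letter \<Rightarrow> letter \<Rightarrow> int" where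
  "pair X X = 2" | "pair Y Y = 2" | "pair X Y = -2" | "pair Y X = -2"

fun qsh :: "'a::field \<Rightarrow> letter list \<Rightarrow> letter list \<Rightarrow> 'a vec" where
  "qsh q [] v = wd v"
| "qsh q (a # u) [] = wd (a # u)"
| "qsh q (a # u) (b # v) =
     (\<lambda>w. lcat a (qsh q u (b # v)) w
          + lcat b (qsh q (a # u) v) w * q powi (\<Sum>c\<leftarrow>a # u. pair c b))"

text \<open>Bilinear extension of the q-shuffle product. Since the q-shuffle of u and v
  is homogeneous of degree length u + length v, only words of length at most
  length w contribute to the coefficient of w.\<close>
definition star :: "'a::field \<Rightarrow> 'a vec \<Rightarrow> 'a vec \<Rightarrow> 'a vec" where
  "star q f g = (\<lambda>w. \<Sum>u\<in>{u. length u \<le> length w}. \<Sum>v\<in>{v. length v \<le> length w}.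
                      f u * g v * qsh q u v w)"

fun alt :: "letter \<Rightarrow> nat \<Rightarrow> letter list" where
  "alt c 0 = []"
| "alt X (Suc n) = X # alt Y n"
| "alt Y (Suc n) = Y # alt X n"

text \<open>W_{-k}, W_{k+1}, tilde G_k.\<close>
definition Wneg :: "nat \<Rightarrow> 'a::field vec" where "Wneg k = wd (alt X (2 * k + 1))"
definition Wpos :: "nat \<Rightarrow> 'a::field vec" where "Wpos k = wd (alt Y (2 * k + 1))"
definition Gt :: "nat \<Rightarrow> 'a::field vec" where "Gt k = wd (alt X (2 * k))"

definition qint :: "'a::field \<Rightarrow> int \<Rightarrow> 'a" where
  "qint q m = (q powi m - q powi (- m)) / (q - inverse q)"

fun bar :: "letter \<Rightarrow> int" where "bar X = 1" | "bar Y = -1"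

definition catalan :: "letter list \<Rightarrow> bool" where
  "catalan v \<longleftrightarrow> (\<forall>i. 1 \<le> i \<and> i \<le> length v - 1 \<longrightarrow> (\<Sum>j<i. bar (v ! j)) \<ge> 0)
                 \<and> (\<Sum>j<length v. bar (v ! j)) = 0"

definition Cn :: "'a::field \<Rightarrow> nat \<Rightarrow> 'a vec" where
  "Cn q n = (\<lambda>w. if catalan w \<and> length w = 2 * n
                 then (\<Prod>i\<le>2 * n. qint q (1 + (\<Sum>j<i. bar (w ! j)))) else 0)"

end

theory Submission
  imports Defs
begin

text \<open>Write E for the sum of the x C_n. Reading words as lattice paths and weighting them as
  in C_n, E is the weighted sum of all paths from height 0 to height 1: a path that returns
  to height 0 gets the weight [0]_q = 0, so the Catalan condition comes for free. Weighting
  every word by m^k, k its number of letters y, turns a sequence of y-homogeneous vectors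
  into one vector, and the q-shuffle product of two such series is the series of the
  convolution. Put G(m), D(m), W(m) for the series of the Gt k, D k, Wneg k. The recursion
  for the D n says D(m) star G(m) = 1.

  The core identities are G(-q) star E = W(-q) and E star G(-1/q) = W(-1/q). They are proved
  by induction on words: the q-shuffle recursion at the first letter links them to companion
  identities for paths starting at any height h, which involve an auxiliary family of paths.
  Hence E = D(-q) star W(-q), and also E = W(-1/q) star D(-1/q), because the anti-automorphism
  sigma (reverse a word and exchange x and y) turns D(m) into a right inverse of G(m) as well.
  The parts of y-degree n are the formulas for x C_n. Finally sigma fixes C_n, D_n and Gt k,
  maps Wneg k to Wpos k and x C_n to C_n y, which gives the formulas for C_n y.\<close>

section \<open>The q-shuffle product on coefficient functions\<close>

lemma UNIV_letter: "(UNIV :: letter set) = {X, Y}"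
  by (auto intro: letter.exhaust)

lemma finite_words_upto: "finite {u :: letter list. length u \<le> n}"
proof -
  have "finite (UNIV :: letter set)" by (simp add: UNIV_letter)
  from finite_lists_length_le[OF this, of n] show ?thesis by simp
qed

definition pairing :: "letter list \<Rightarrow> letter \<Rightarrow> int" where
  "pairing u b = (\<Sum>c\<leftarrow>u. pair c b)"

lemma pairing_Nil [simp]: "pairing [] b = 0"
  and pairing_Cons [simp]: "pairing (c # u) b = pair c b + pairing u b"
  and pairing_append [simp]: "pairing (u @ v) b = pairing u b + pairing v b"
  by (simp_all add: pairing_def)

lemma pair_commute: "pair a b = pair b a"
  by (cases a; cases b) auto

lemma qsh_Nil_right: "qsh q u [] = wd u"
  by (cases u) auto

lemma qsh_at_Nil: "qsh q u v [] = (if u = [] \<and> v = [] then 1 else 0)"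
  by (cases u; cases v) (auto simp: wd_def lcat_def)

lemma qsh_at_Cons:
  "qsh q u v (a # w) =
     (case u of [] \<Rightarrow> 0 | b # u' \<Rightarrow> if b = a then qsh q u' v w else 0)
   + (case v of [] \<Rightarrow> 0 | b # v' \<Rightarrow> if b = a then q powi pairing u a * qsh q u v' w else 0)"
  by (cases u; cases v) (auto simp: wd_def lcat_def qsh_Nil_right pairing_def)

text \<open>Every word in the support of a q-shuffle of u and v is a shuffle of u and v, so
  additive word statistics add up.\<close>
lemma qsh_nonzero_sum_list:
  fixes F :: "letter \<Rightarrow> 'b::comm_monoid_add"
  assumes "qsh q u v w \<noteq> 0"
  shows "(\<Sum>c\<leftarrow>w. F c) = (\<Sum>c\<leftarrow>u. F c) + (\<Sum>c\<leftarrow>v. F c)"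
  using assms
proof (induction w arbitrary: u v)
  case Nil
  then show ?case by (auto simp: qsh_at_Nil split: if_splits)
next
  case (Cons a w)
  from Cons.prems consider u' where "u = a # u'" "qsh q u' v w \<noteq> 0"
    | v' where "v = a # v'" "qsh q u v' w \<noteq> 0"
    unfolding qsh_at_Cons by (auto split: list.splits if_splits; metis add_0 mult_zero_right)
  then show ?case
    by cases (use Cons.IH in \<open>auto simp: add_ac\<close>)
qed

lemma qsh_nonzero_length: "qsh q u v w \<noteq> 0 \<Longrightarrow> length w = length u + length v"
  using qsh_nonzero_sum_list[of q u v w "\<lambda>_. 1 :: nat"] by (simp add: sum_list_triv)

lemma star_eq_bounded:
  assumes "length w \<le> N1" "length w \<le> N2"
  shows "star q f g w =
    (\<Sum>u\<in>{u. length u \<le> N1}. \<Sum>v\<in>{v. length v \<le> N2}. f u * g v * qsh q u v w)"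
proof -
  have vanish: "f u * g v * qsh q u v w = 0" if "length w < length u \<or> length w < length v" for u v
    using qsh_nonzero_length[of q u v w] that by auto
  show ?thesis
    unfolding star_def using assms
    by (intro sum.mono_neutral_cong_left finite_words_upto ballI)
       (auto simp: vanish not_le intro!: sum.neutral)
qed

lemma sum_words_case_Cons:
  fixes a :: letter
  shows "(\<Sum>u\<in>{u. length u \<le> Suc n}. case u of [] \<Rightarrow> 0 | b # u' \<Rightarrow> if b = a then F u' else 0)
   = (\<Sum>u\<in>{u. length u \<le> n}. F u :: 'b::comm_monoid_add)"
proof -
  have "(\<Sum>u\<in>{u. length u \<le> Suc n}. case u of [] \<Rightarrow> 0 | b # u' \<Rightarrow> if b = a then F u' else 0)
      = (\<Sum>u\<in>Cons a ` {u. length u \<le> n}. case u of [] \<Rightarrow> 0 | b # u' \<Rightarrow> if b = a then F u' else 0)"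
    by (rule sum.mono_neutral_right[OF finite_words_upto]) (auto split: list.splits)
  also have "\<dots> = (\<Sum>u\<in>{u. length u \<le> n}. F u)"
    by (subst sum.reindex) (auto simp: inj_on_def)
  finally show ?thesis .
qed

definition lquot :: "letter \<Rightarrow> 'a vec \<Rightarrow> 'a vec" where
  "lquot a f = (\<lambda>u. f (a # u))"

definition rquot :: "letter \<Rightarrow> 'a vec \<Rightarrow> 'a vec" where
  "rquot a f = (\<lambda>u. f (u @ [a]))"

definition twist :: "'a::field \<Rightarrow> letter \<Rightarrow> 'a vec \<Rightarrow> 'a vec" where
  "twist q a f = (\<lambda>u. q powi pairing u a * f u)"

lemma star_Nil: "star q f g [] = f [] * g []"
  by (simp add: star_def qsh_at_Nil wd_def)

text \<open>The q-shuffle recursion read at the first letter of the result: left quotients act on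
  star as twisted derivations.\<close>
lemma star_Cons:
  "star q f g (a # w) = star q (lquot a f) g w + star q (twist q a f) (lquot a g) w"
proof -
  let ?n = "length w"
  let ?W = "\<lambda>n. {u :: letter list. length u \<le> n}"
  have "star q f g (a # w) = (\<Sum>u\<in>?W (Suc ?n). \<Sum>v\<in>?W (Suc ?n).
        (case u of [] \<Rightarrow> 0 | b # u' \<Rightarrow> if b = a then f (a # u') * g v * qsh q u' v w else 0))
      + (\<Sum>u\<in>?W (Suc ?n). \<Sum>v\<in>?W (Suc ?n).
        (case v of [] \<Rightarrow> 0 | b # v' \<Rightarrow>
           if b = a then f u * g (a # v') * (q powi pairing u a * qsh q u v' w) else 0))"
    unfolding star_def sum.distrib[symmetric]
    by (intro sum.cong refl) (auto simp: qsh_at_Cons algebra_simps split: list.splits)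
  also have "\<dots> = (\<Sum>u\<in>?W ?n. \<Sum>v\<in>?W (Suc ?n). f (a # u) * g v * qsh q u v w)
      + (\<Sum>u\<in>?W (Suc ?n). \<Sum>v\<in>?W ?n. f u * g (a # v) * (q powi pairing u a * qsh q u v w))"
  proof -
    have "(\<Sum>u\<in>?W (Suc ?n). \<Sum>v\<in>?W (Suc ?n).
        (case u of [] \<Rightarrow> 0 | b # u' \<Rightarrow> if b = a then f (a # u') * g v * qsh q u' v w else 0))
      = (\<Sum>u\<in>?W (Suc ?n). case u of [] \<Rightarrow> 0 | b # u' \<Rightarrow>
          if b = a then (\<Sum>v\<in>?W (Suc ?n). f (a # u') * g v * qsh q u' v w) else 0)"
      by (intro sum.cong refl) (auto split: list.split)
    then show ?thesis
      by (simp only: sum_words_case_Cons)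
  qed
  also have "\<dots> = star q (lquot a f) g w + star q (twist q a f) (lquot a g) w"
  proof -
    have "star q (lquot a f) g w = (\<Sum>u\<in>?W ?n. \<Sum>v\<in>?W (Suc ?n). f (a # u) * g v * qsh q u v w)"
      by (simp add: star_eq_bounded[of w ?n "Suc ?n"] lquot_def)
    moreover have "star q (twist q a f) (lquot a g) w
        = (\<Sum>u\<in>?W (Suc ?n). \<Sum>v\<in>?W ?n. f u * g (a # v) * (q powi pairing u a * qsh q u v w))"
      by (simp add: star_eq_bounded[of w "Suc ?n" ?n] lquot_def twist_def algebra_simps)
    ultimately show ?thesis by simp
  qed
  finally show ?thesis .
qed

lemma star_smul_left: "star q (\<lambda>u. c * f u) g w = c * star q f g w"
  and star_smul_right: "star q f (\<lambda>u. c * g u) w = c * star q f g w"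
  by (simp_all add: star_def sum_distrib_left algebra_simps)

lemma star_add_left: "star q (\<lambda>u. f u + f' u) g w = star q f g w + star q f' g w"
  and star_add_right: "star q f (\<lambda>u. g u + g' u) w = star q f g w + star q f g' w"
  by (simp_all add: star_def sum.distrib algebra_simps)

lemma star_zero_left [simp]: "star q (\<lambda>_. 0) g = (\<lambda>_. 0)"
  and star_zero_right [simp]: "star q f (\<lambda>_. 0) = (\<lambda>_. 0)"
  by (simp_all add: star_def fun_eq_iff)

lemma star_wd_Nil_left: "star q (wd []) g = g"
proof
  fix w show "star q (wd []) g w = g w"
  proof (induction w arbitrary: g)
    case (Cons a w)
    have "lquot a (wd [] :: 'a vec) = (\<lambda>_. 0)" "twist q a (wd [] :: 'a vec) = wd []"
      by (simp_all add: lquot_def twist_def wd_def fun_eq_iff)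
    then have "star q (wd []) g (a # w) = star q (wd []) (lquot a g) w"
      by (simp add: star_Cons)
    then show ?case
      by (simp add: Cons.IH lquot_def)
  qed (simp add: star_Nil wd_def)
qed

lemma star_wd_Nil_right: "star q f (wd []) = f"
proof
  fix w show "star q f (wd []) w = f w"
  proof (induction w arbitrary: f)
    case (Cons a w)
    have "lquot a (wd [] :: 'a vec) = (\<lambda>_. 0)"
      by (simp add: lquot_def wd_def fun_eq_iff)
    then have "star q f (wd []) (a # w) = star q (lquot a f) (wd []) w"
      by (simp add: star_Cons)
    then show ?case
      by (simp add: Cons.IH lquot_def)
  qed (simp add: star_Nil wd_def)
qed

text \<open>The twist is multiplicative because pairing is additive along q-shuffles.\<close>
lemma twist_star:
  assumes "q \<noteq> 0"
  shows "twist q a (star q f g) = star q (twist q a f) (twist q a g)"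
proof
  fix w
  have termwise: "q powi pairing w a * (f u * g v * qsh q u v w)
      = (q powi pairing u a * f u) * (q powi pairing v a * g v) * qsh q u v w" for u v
  proof (cases "qsh q u v w = 0")
    case False
    then have "pairing w a = pairing u a + pairing v a"
      using qsh_nonzero_sum_list[of q u v w "\<lambda>c. pair c a"] by (simp add: pairing_def)
    then show ?thesis using assms by (simp add: power_int_add algebra_simps)
  qed simp
  then show "twist q a (star q f g) w = star q (twist q a f) (twist q a g) w"
    unfolding twist_def star_def sum_distrib_left by (intro sum.cong refl termwise)
qed

lemma star_assoc:
  assumes "q \<noteq> 0"
  shows "star q (star q f g) h = star q f (star q g h)"
proof
  fix w show "star q (star q f g) h w = star q f (star q g h) w"
  proof (induction w arbitrary: f g h)
    case (Cons a w)
    have lquot_star: "lquot a (star q f g)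
        = (\<lambda>w. star q (lquot a f) g w + star q (twist q a f) (lquot a g) w)"
      for f g :: "'a vec"
      by (simp add: lquot_def star_Cons)
    show ?case
      by (simp add: star_Cons lquot_star twist_star[OF assms] star_add_left star_add_right Cons.IH)
  qed (simp add: star_Nil)
qed

lemma star_snoc:
  assumes "q \<noteq> 0"
  shows "star q f g (w @ [a]) = star q f (rquot a g) w + star q (rquot a f) (twist q a g) w"
proof (induction w arbitrary: f g)
  case Nil
  show ?case by (simp add: star_Cons star_Nil lquot_def rquot_def twist_def)
next
  case (Cons b w)
  have rquot_twist: "rquot a (twist q b f) = (\<lambda>u. q powi pair a b * twist q b (rquot a f) u)"
    using assms by (simp add: rquot_def twist_def fun_eq_iff power_int_add algebra_simps)
  have lquot_twist: "lquot b (twist q a g) = (\<lambda>u. q powi pair a b * twist q a (lquot b g) u)"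
    using assms by (simp add: lquot_def twist_def fun_eq_iff power_int_add algebra_simps pair_commute)
  have rquot_lquot: "rquot a (lquot b h) = lquot b (rquot a h)" for h :: "'a vec"
    by (simp add: rquot_def lquot_def)
  show ?case
    by (simp add: star_Cons Cons.IH rquot_twist lquot_twist rquot_lquot star_smul_left star_smul_right)
qed

fun swap_letter :: "letter \<Rightarrow> letter" where
  "swap_letter X = Y"
| "swap_letter Y = X"

lemma swap_letter_swap_letter [simp]: "swap_letter (swap_letter c) = c"
  and pair_swap_letter [simp]: "pair (swap_letter a) (swap_letter b) = pair a b"
  by (cases c; cases a; cases b; simp)+

definition rev_swap :: "letter list \<Rightarrow> letter list" where
  "rev_swap w = rev (map swap_letter w)"

definition rev_swap_vec :: "'a vec \<Rightarrow> 'a vec" where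
  "rev_swap_vec f = (\<lambda>u. f (rev_swap u))"

lemma rev_swap_Nil [simp]: "rev_swap [] = []"
  and rev_swap_Cons [simp]: "rev_swap (a # w) = rev_swap w @ [swap_letter a]"
  and rev_swap_append: "rev_swap (u @ v) = rev_swap v @ rev_swap u"
  and rev_swap_rev_swap [simp]: "rev_swap (rev_swap w) = w"
  and length_rev_swap [simp]: "length (rev_swap w) = length w"
  by (simp_all add: rev_swap_def rev_map comp_def)

lemma rev_swap_eq_iff: "rev_swap w = u \<longleftrightarrow> w = rev_swap u"
  by auto

lemma pairing_rev_swap: "pairing (rev_swap u) (swap_letter a) = pairing u a"
  by (induction u) auto

lemma rev_swap_vec_wd: "rev_swap_vec (wd u) = wd (rev_swap u)"
  by (auto simp: rev_swap_vec_def wd_def fun_eq_iff rev_swap_eq_iff)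

lemma star_rev_swap:
  assumes "q \<noteq> 0"
  shows "star q f g (rev_swap w) = star q (rev_swap_vec g) (rev_swap_vec f) w"
proof (induction w arbitrary: f g)
  case Nil
  then show ?case by (simp add: star_Nil rev_swap_vec_def)
next
  case (Cons a w)
  have "rev_swap_vec (rquot (swap_letter a) h) = lquot a (rev_swap_vec h)" for h :: "'a vec"
    by (simp add: rev_swap_vec_def rquot_def lquot_def)
  moreover have "rev_swap_vec (twist q (swap_letter a) h) = twist q a (rev_swap_vec h)" for h :: "'a vec"
    by (simp add: rev_swap_vec_def twist_def pairing_rev_swap)
  ultimately show ?case
    by (simp add: star_snoc[OF assms] Cons.IH star_Cons)
qed

section \<open>q-integers and weighted lattice paths\<close>

lemma qint_0 [simp]: "qint q 0 = 0"
  by (simp add: qint_def)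

lemma q_minus_inverse_nonzero:
  assumes "q \<noteq> 0" "q ^ 2 \<noteq> (1 :: 'a::field)"
  shows "q - inverse q \<noteq> 0"
  using assms by (auto simp: power2_eq_square field_simps)

lemma qint_1:
  assumes "q \<noteq> 0" "q ^ 2 \<noteq> (1 :: 'a::field)"
  shows "qint q 1 = 1"
  using q_minus_inverse_nonzero[OF assms] by (simp add: qint_def power_int_minus)

lemma qint_succ_mult_q:
  assumes "q \<noteq> 0" "q ^ 2 \<noteq> (1 :: 'a::field)"
  shows "qint q (h + 1) = q * qint q h + q powi (- h)"
proof -
  have "q powi (h + 1) = q powi h * q" "q powi (- (h + 1)) = inverse (q powi h) * inverse q"
    using assms(1) by (simp add: power_int_add, subst power_int_minus, simp add: power_int_add)
  then show ?thesis
    using q_minus_inverse_nonzero[OF assms] assms(1)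
    by (simp add: qint_def power_int_minus field_simps)
qed

lemma qint_succ_mult_inverse_q:
  assumes "q \<noteq> 0" "q ^ 2 \<noteq> (1 :: 'a::field)"
  shows "qint q (h + 1) = inverse q * qint q h + q powi h"
proof -
  have "q powi (h + 1) = q powi h * q" "q powi (- (h + 1)) = inverse (q powi h) * inverse q"
    using assms(1) by (simp add: power_int_add, subst power_int_minus, simp add: power_int_add)
  then show ?thesis
    using q_minus_inverse_nonzero[OF assms] assms(1)
    by (simp add: qint_def power_int_minus field_simps)
qed

lemma power_int_mult_qint_pred_q:
  assumes "q \<noteq> 0" "q ^ 2 \<noteq> (1 :: 'a::field)"
  shows "q powi (h + 1) * qint q (h - 1) + q = q powi h * qint q h"
  using qint_succ_mult_q[OF assms, of "h - 1"] assms(1)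
  by (simp add: power_int_add power_int_diff power_int_minus field_simps)

lemma power_int_mult_qint_pred_inverse_q:
  assumes "q \<noteq> 0" "q ^ 2 \<noteq> (1 :: 'a::field)"
  shows "q powi (h - 3) * qint q (h - 1) + q powi (2 * h - 3) = q powi (h - 2) * qint q h"
proof -
  have split: "q powi (2 * h - 3) = q powi (h - 2) * q powi (h - 1)"
    using assms(1) by (simp add: power_int_add[symmetric])
  have succ: "qint q h = inverse q * qint q (h - 1) + q powi (h - 1)"
    using qint_succ_mult_inverse_q[OF assms, of "h - 1"] by simp
  show ?thesis
    unfolding split succ using assms(1) by (simp add: power_int_diff field_simps power_Suc[symmetric])
qed

definition height :: "letter list \<Rightarrow> int" where
  "height u = (\<Sum>c\<leftarrow>u. bar c)"

lemma height_Nil [simp]: "height [] = 0"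
  and height_Cons [simp]: "height (c # u) = bar c + height u"
  and height_append [simp]: "height (u @ v) = height u + height v"
  by (simp_all add: height_def)

lemma bar_eq: "bar c = (if c = Y then -1 else 1)"
  by (cases c) auto

lemma pair_eq_bar: "pair c X = 2 * bar c" "pair c Y = - 2 * bar c"
  by (cases c; simp)+

lemma pairing_X: "pairing u X = 2 * height u"
  and pairing_Y: "pairing u Y = - 2 * height u"
  by (induction u) (simp_all add: pair_eq_bar)

lemma height_eq_length_count: "height u = int (length u) - 2 * int (count_list u Y)"
  by (induction u) (auto simp: bar_eq)

text \<open>A word is a lattice path with steps bar c. Its weight, as in C_n, is the product of the
  q-integers of the heights visited after the start h.\<close>
fun Eweight :: "'a::field \<Rightarrow> int \<Rightarrow> letter list \<Rightarrow> 'a" where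
  "Eweight q h [] = 1"
| "Eweight q h (c # u) = qint q (h + bar c) * Eweight q (h + bar c) u"

text \<open>Epath q 0 is the sum of the x C_n, see lcat_X_Cn.\<close>
definition Epath :: "'a::field \<Rightarrow> int \<Rightarrow> 'a vec" where
  "Epath q h u = (if h + height u = 1 then Eweight q h u else 0)"

text \<open>A path that crosses height 0 picks up the factor [0]_q = 0.\<close>
lemma Eweight_from_negative:
  assumes "h < 0" "h + height u > 0"
  shows "Eweight q h u = 0"
  using assms
proof (induction u arbitrary: h)
  case (Cons c u)
  then show ?case
    using Cons.IH[of "h + bar c"] by (cases "h + bar c = 0"; cases c) auto
qed simp

lemma Eweight_to_nonpositive:
  assumes "h > 0" "i \<le> length u" "h + height (take i u) \<le> 0"
  shows "Eweight q h u = 0"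
  using assms
proof (induction u arbitrary: h i)
  case (Cons c u)
  show ?case
  proof (cases "h + bar c = 0")
    case False
    with Cons.prems obtain i' where "i = Suc i'" "h + bar c > 0"
      by (cases i; cases c) auto
    with Cons.prems Cons.IH[of "h + bar c" i'] show ?thesis
      by simp
  qed simp
qed simp

lemma Epath_minus_one: "Epath q (-1) = (\<lambda>_. 0)"
  by (auto simp: Epath_def fun_eq_iff intro: Eweight_from_negative)

lemma Epath_Nil: "Epath q h [] = (if h = 1 then 1 else 0)"
  by (simp add: Epath_def)

lemma lquot_Epath_X: "lquot X (Epath q h) = (\<lambda>u. qint q (h + 1) * Epath q (h + 1) u)"
  and lquot_Epath_Y: "lquot Y (Epath q h) = (\<lambda>u. qint q (h - 1) * Epath q (h - 1) u)"
  by (simp_all add: lquot_def Epath_def fun_eq_iff algebra_simps)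

lemma twist_Epath_X: "twist q X (Epath q h) = (\<lambda>u. q powi (2 - 2 * h) * Epath q h u)"
  and twist_Epath_Y: "twist q Y (Epath q h) = (\<lambda>u. q powi (2 * h - 2) * Epath q h u)"
proof -
  have "h + height u = 1 \<longleftrightarrow> height u = 1 - h" for u
    by auto
  then show "twist q X (Epath q h) = (\<lambda>u. q powi (2 - 2 * h) * Epath q h u)"
    "twist q Y (Epath q h) = (\<lambda>u. q powi (2 * h - 2) * Epath q h u)"
    by (auto simp: twist_def Epath_def pairing_X pairing_Y fun_eq_iff)
qed

lemma star_Epath_X:
  "star q (Epath q h) g (X # w) = qint q (h + 1) * star q (Epath q (h + 1)) g w
     + q powi (2 - 2 * h) * star q (Epath q h) (lquot X g) w"
  and star_Epath_Y:
  "star q (Epath q h) g (Y # w) = qint q (h - 1) * star q (Epath q (h - 1)) g w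
     + q powi (2 * h - 2) * star q (Epath q h) (lquot Y g) w"
  by (simp_all add: star_Cons lquot_Epath_X lquot_Epath_Y twist_Epath_X twist_Epath_Y star_smul_left)

text \<open>An auxiliary path family which closes the inductions below; the scale s is q^-1 for
  left and q for right multiplication by the series of the Gt k.\<close>
fun Qweight :: "'a::field \<Rightarrow> 'a \<Rightarrow> int \<Rightarrow> letter list \<Rightarrow> 'a" where
  "Qweight s q h [] = 1"
| "Qweight s q h (X # u) = s * qint q (h + 1) * Qweight s q (h + 1) u"
| "Qweight s q h (Y # u) = qint q h * Qweight s q (h - 1) u"

definition Qpath :: "'a::field \<Rightarrow> 'a \<Rightarrow> int \<Rightarrow> 'a vec" where
  "Qpath s q h u = (if h + height u = 0 then Qweight s q h u else 0)"

lemma Qpath_Nil: "Qpath s q h [] = (if h = 0 then 1 else 0)"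
  and Qpath_X: "Qpath s q h (X # u) = s * qint q (h + 1) * Qpath s q (h + 1) u"
  and Qpath_Y: "Qpath s q h (Y # u) = qint q h * Qpath s q (h - 1) u"
  by (simp_all add: Qpath_def algebra_simps)

lemma alt_Suc: "alt c (Suc n) = c # alt (swap_letter c) n"
  by (cases c) auto

lemma length_alt [simp]: "length (alt c n) = n"
  by (induction n arbitrary: c) (auto simp: alt_Suc)

lemma Cons_eq_alt_iff: "a # u = alt c (Suc (length u)) \<longleftrightarrow> a = c \<and> u = alt (swap_letter c) (length u)"
  by (simp add: alt_Suc)

lemma pair_swap_letter_left: "pair (swap_letter c) a = - pair c a"
  and bar_swap_letter: "bar (swap_letter c) = - bar c"
  by (cases c; cases a; simp)+

lemma pairing_alt: "pairing (alt c n) a = (if even n then 0 else pair c a)"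
  by (induction n arbitrary: c) (simp_all add: alt_Suc pair_swap_letter_left)

lemma height_alt: "height (alt c n) = (if even n then 0 else bar c)"
  by (induction n arbitrary: c) (simp_all add: alt_Suc bar_swap_letter)

lemma count_alt: "count_list (alt c n) Y = (if c = X then n div 2 else (n + 1) div 2)"
proof (induction n arbitrary: c)
  case (Suc n)
  then show ?case by (cases c) auto
qed simp

text \<open>Generating series of the alternating words, the exponent of m counting the letters y:
  Gt_ser m is the sum of the m^k Gt k, Wneg_ser m of the m^k Wneg k, Wpos_ser m of the
  m^(k+1) Wpos k, and G_ser m of the m^k (yx)^k.\<close>
definition Gt_ser :: "'a::field \<Rightarrow> 'a vec" where
  "Gt_ser m u = (if even (length u) \<and> u = alt X (length u) then m ^ count_list u Y else 0)"
definition Wpos_ser :: "'a::field \<Rightarrow> 'a vec" where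
  "Wpos_ser m u = (if odd (length u) \<and> u = alt Y (length u) then m ^ count_list u Y else 0)"
definition Wneg_ser :: "'a::field \<Rightarrow> 'a vec" where
  "Wneg_ser m u = (if odd (length u) \<and> u = alt X (length u) then m ^ count_list u Y else 0)"
definition G_ser :: "'a::field \<Rightarrow> 'a vec" where
  "G_ser m u = (if even (length u) \<and> u = alt Y (length u) then m ^ count_list u Y else 0)"

lemma Wneg_ser_Nil [simp]: "Wneg_ser m [] = 0"
  and G_ser_Nil [simp]: "G_ser m [] = 1"
  by (simp_all add: Wneg_ser_def G_ser_def)

lemma Wneg_ser_X [simp]: "Wneg_ser m (X # u) = G_ser m u"
  using Cons_eq_alt_iff[of X u X] by (auto simp: Wneg_ser_def G_ser_def)

lemma Wneg_ser_Y [simp]: "Wneg_ser m (Y # u) = 0"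
  using Cons_eq_alt_iff[of Y u X] by (auto simp: Wneg_ser_def)

lemma G_ser_X [simp]: "G_ser m (X # u) = 0"
  using Cons_eq_alt_iff[of X u Y] by (auto simp: G_ser_def)

lemma G_ser_Y [simp]: "G_ser m (Y # u) = m * Wneg_ser m u"
  using Cons_eq_alt_iff[of Y u Y] by (auto simp: Wneg_ser_def G_ser_def)

lemma lquot_Gt_ser_X: "lquot X (Gt_ser m) = Wpos_ser m"
  using Cons_eq_alt_iff[of X _ X] by (auto simp: lquot_def Gt_ser_def Wpos_ser_def fun_eq_iff)

lemma lquot_Gt_ser_Y: "lquot Y (Gt_ser m) = (\<lambda>_. 0)"
  using Cons_eq_alt_iff[of Y _ X] by (auto simp: lquot_def Gt_ser_def fun_eq_iff)

lemma lquot_Wpos_ser_X: "lquot X (Wpos_ser m) = (\<lambda>_. 0)"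
  using Cons_eq_alt_iff[of X _ Y] by (auto simp: lquot_def Wpos_ser_def fun_eq_iff)

lemma lquot_Wpos_ser_Y: "lquot Y (Wpos_ser m) = (\<lambda>u. m * Gt_ser m u)"
  using Cons_eq_alt_iff[of Y _ Y] by (auto simp: lquot_def Gt_ser_def Wpos_ser_def fun_eq_iff)

lemma twist_Gt_ser: "twist q a (Gt_ser m) = Gt_ser m"
proof
  fix u show "twist q a (Gt_ser m) u = Gt_ser m u"
    using pairing_alt[of X "length u" a] by (auto simp: twist_def Gt_ser_def)
qed

lemma twist_Wpos_ser_X: "twist q X (Wpos_ser m) = (\<lambda>u. q powi -2 * Wpos_ser m u)"
proof
  fix u show "twist q X (Wpos_ser m) u = q powi -2 * Wpos_ser m u"
    using pairing_alt[of Y "length u" X] by (auto simp: twist_def Wpos_ser_def)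
qed

lemma twist_Wpos_ser_Y: "twist q Y (Wpos_ser m) = (\<lambda>u. q powi 2 * Wpos_ser m u)"
proof
  fix u show "twist q Y (Wpos_ser m) u = q powi 2 * Wpos_ser m u"
    using pairing_alt[of Y "length u" Y] by (auto simp: twist_def Wpos_ser_def)
qed

lemma star_Gt_ser_X: "star q (Gt_ser m) g (X # w) = star q (Wpos_ser m) g w + star q (Gt_ser m) (lquot X g) w"
  and star_Gt_ser_Y: "star q (Gt_ser m) g (Y # w) = star q (Gt_ser m) (lquot Y g) w"
  and star_Wpos_ser_X: "star q (Wpos_ser m) g (X # w) = q powi -2 * star q (Wpos_ser m) (lquot X g) w"
  and star_Wpos_ser_Y: "star q (Wpos_ser m) g (Y # w)
    = m * star q (Gt_ser m) g w + q powi 2 * star q (Wpos_ser m) (lquot Y g) w"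
  by (simp_all add: star_Cons lquot_Gt_ser_X lquot_Gt_ser_Y lquot_Wpos_ser_X lquot_Wpos_ser_Y
      twist_Gt_ser twist_Wpos_ser_X twist_Wpos_ser_Y star_smul_left)

section \<open>The identities G(-q) star E = W(-q) and E star G(-1/q) = W(-1/q)\<close>

text \<open>The induction hypothesis for G(-q) star E = W(-q): the companion identities for every
  starting height, and for left multiplication by the series of the Wpos k.\<close>
definition Gt_ser_Epath_eqs :: "'a::field \<Rightarrow> letter list \<Rightarrow> bool" where
  "Gt_ser_Epath_eqs q w \<longleftrightarrow> (\<forall>h \<ge> 0.
     star q (Gt_ser (-q)) (Epath q h) w
       = (if h = 0 then Wneg_ser (-q) w else Qpath (inverse q) q (h - 1) w)
   \<and> star q (Wpos_ser (-q)) (Epath q h) w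
       = (if h = 0 then G_ser (-q) w else 0) - q powi h * Qpath (inverse q) q h w)"

lemma Gt_ser_Epath_eqs_Nil: "Gt_ser_Epath_eqs q []"
  by (simp add: Gt_ser_Epath_eqs_def star_Nil Gt_ser_def Wpos_ser_def Epath_Nil Qpath_Nil)

lemma Gt_ser_Epath_eqs_X:
  assumes q0: "q \<noteq> 0" and q2: "q ^ 2 \<noteq> 1" and IH: "Gt_ser_Epath_eqs q w"
  shows "Gt_ser_Epath_eqs q (X # w)"
  unfolding Gt_ser_Epath_eqs_def
proof (intro allI impI conjI)
  fix h :: int
  assume h: "0 \<le> h"
  let ?Q = "Qpath (inverse q) q"
  have A1: "star q (Gt_ser (-q)) (Epath q (h + 1)) w = ?Q h w"
    and B: "star q (Wpos_ser (-q)) (Epath q h) w = (if h = 0 then G_ser (-q) w else 0) - q powi h * ?Q h w"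
    and B1: "star q (Wpos_ser (-q)) (Epath q (h + 1)) w = - (q powi (h + 1) * ?Q (h + 1) w)"
    using IH h by (auto simp: Gt_ser_Epath_eqs_def)
  have "star q (Gt_ser (-q)) (Epath q h) (X # w)
      = star q (Wpos_ser (-q)) (Epath q h) w + qint q (h + 1) * star q (Gt_ser (-q)) (Epath q (h + 1)) w"
    by (simp add: star_Gt_ser_X lquot_Epath_X star_smul_right)
  also have "\<dots> = (if h = 0 then G_ser (-q) w else 0) + inverse q * qint q h * ?Q h w"
    unfolding A1 B qint_succ_mult_inverse_q[OF q0 q2] by (simp add: algebra_simps)
  finally show "star q (Gt_ser (-q)) (Epath q h) (X # w)
      = (if h = 0 then Wneg_ser (-q) (X # w) else ?Q (h - 1) (X # w))"
    by (simp add: Qpath_X)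
  have "star q (Wpos_ser (-q)) (Epath q h) (X # w)
      = q powi -2 * (qint q (h + 1) * star q (Wpos_ser (-q)) (Epath q (h + 1)) w)"
    by (simp add: star_Wpos_ser_X lquot_Epath_X star_smul_right)
  also have "\<dots> = - (q powi h * (inverse q * qint q (h + 1) * ?Q (h + 1) w))"
    unfolding B1 using q0 by (simp add: power_int_add power_int_minus power2_eq_square field_simps)
  finally show "star q (Wpos_ser (-q)) (Epath q h) (X # w)
      = (if h = 0 then G_ser (-q) (X # w) else 0) - q powi h * ?Q h (X # w)"
    by (simp add: Qpath_X)
qed

lemma Gt_ser_Epath_eqs_Y:
  assumes q0: "q \<noteq> 0" and q2: "q ^ 2 \<noteq> 1" and IH: "Gt_ser_Epath_eqs q w"
  shows "Gt_ser_Epath_eqs q (Y # w)"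
  unfolding Gt_ser_Epath_eqs_def
proof (intro allI impI conjI)
  fix h :: int
  assume h: "0 \<le> h"
  let ?Q = "Qpath (inverse q) q"
  show "star q (Gt_ser (-q)) (Epath q h) (Y # w)
      = (if h = 0 then Wneg_ser (-q) (Y # w) else ?Q (h - 1) (Y # w))"
  proof (cases "h = 0")
    case False
    with h IH have "star q (Gt_ser (-q)) (Epath q (h - 1)) w
        = (if h = 1 then Wneg_ser (-q) w else ?Q (h - 2) w)"
      by (simp add: Gt_ser_Epath_eqs_def)
    with False show ?thesis
      by (simp add: star_Gt_ser_Y lquot_Epath_Y star_smul_right Qpath_Y)
  qed (simp add: star_Gt_ser_Y lquot_Epath_Y Epath_minus_one)
  have B: "star q (Wpos_ser (-q)) (Epath q h) (Y # w)
      = - q * star q (Gt_ser (-q)) (Epath q h) w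
        + q powi 2 * (qint q (h - 1) * star q (Wpos_ser (-q)) (Epath q (h - 1)) w)"
    by (simp add: star_Wpos_ser_Y lquot_Epath_Y star_smul_right)
  show "star q (Wpos_ser (-q)) (Epath q h) (Y # w)
      = (if h = 0 then G_ser (-q) (Y # w) else 0) - q powi h * ?Q h (Y # w)"
  proof (cases "h = 0")
    case True
    from this B IH show ?thesis
      by (simp add: Epath_minus_one Gt_ser_Epath_eqs_def Qpath_Y)
  next
    case False
    with h IH have A0: "star q (Gt_ser (-q)) (Epath q h) w = ?Q (h - 1) w"
      and B1: "qint q (h - 1) * star q (Wpos_ser (-q)) (Epath q (h - 1)) w
        = - (qint q (h - 1) * q powi (h - 1) * ?Q (h - 1) w)"
      by (auto simp: Gt_ser_Epath_eqs_def)
    have "star q (Wpos_ser (-q)) (Epath q h) (Y # w)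
        = - ((q powi (h + 1) * qint q (h - 1) + q) * ?Q (h - 1) w)"
      unfolding B A0 B1 using q0 by (simp add: power_int_add power_int_diff power2_eq_square field_simps)
    also have "\<dots> = - (q powi h * (qint q h * ?Q (h - 1) w))"
      by (simp add: power_int_mult_qint_pred_q[OF q0 q2])
    finally show ?thesis
      using False by (simp add: Qpath_Y)
  qed
qed

lemma Gt_ser_star_Epath_0:
  assumes "q \<noteq> 0" "q ^ 2 \<noteq> 1"
  shows "star q (Gt_ser (-q)) (Epath q 0) = Wneg_ser (-q)"
proof
  fix w
  have "Gt_ser_Epath_eqs q w"
  proof (induction w)
    case (Cons c w)
    then show ?case
      by (cases c) (simp_all add: Gt_ser_Epath_eqs_X Gt_ser_Epath_eqs_Y assms)
  qed (rule Gt_ser_Epath_eqs_Nil)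
  then show "star q (Gt_ser (-q)) (Epath q 0) w = Wneg_ser (-q) w"
    by (simp add: Gt_ser_Epath_eqs_def)
qed

definition Epath_Gt_ser_eqs :: "'a::field \<Rightarrow> letter list \<Rightarrow> bool" where
  "Epath_Gt_ser_eqs q w \<longleftrightarrow> (\<forall>h \<ge> 0.
     star q (Epath q h) (Gt_ser (- inverse q)) w
       = (if h = 0 then Wneg_ser (- inverse q) w else Qpath q q (h - 1) w)
   \<and> star q (Epath q h) (Wpos_ser (- inverse q)) w
       = (if h = 0 then q powi -2 * G_ser (- inverse q) w else 0) - q powi (h - 2) * Qpath q q h w)"

lemma Epath_Gt_ser_eqs_Nil: "Epath_Gt_ser_eqs q []"
  by (simp add: Epath_Gt_ser_eqs_def star_Nil Gt_ser_def Wpos_ser_def Epath_Nil Qpath_Nil)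

lemma Epath_Gt_ser_eqs_X:
  assumes q0: "q \<noteq> 0" and q2: "q ^ 2 \<noteq> 1" and IH: "Epath_Gt_ser_eqs q w"
  shows "Epath_Gt_ser_eqs q (X # w)"
  unfolding Epath_Gt_ser_eqs_def
proof (intro allI impI conjI)
  fix h :: int
  assume h: "0 \<le> h"
  let ?m = "- inverse q"
  let ?Q = "Qpath q q"
  have A1: "star q (Epath q (h + 1)) (Gt_ser ?m) w = ?Q h w"
    and B: "star q (Epath q h) (Wpos_ser ?m) w
      = (if h = 0 then q powi -2 * G_ser ?m w else 0) - q powi (h - 2) * ?Q h w"
    and B1: "star q (Epath q (h + 1)) (Wpos_ser ?m) w = - (q powi (h - 1) * ?Q (h + 1) w)"
    using IH h by (auto simp: Epath_Gt_ser_eqs_def)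
  have "star q (Epath q h) (Gt_ser ?m) (X # w)
      = qint q (h + 1) * star q (Epath q (h + 1)) (Gt_ser ?m) w
        + q powi (2 - 2 * h) * star q (Epath q h) (Wpos_ser ?m) w"
    by (simp add: star_Epath_X lquot_Gt_ser_X)
  also have "\<dots> = (if h = 0 then G_ser ?m w else 0) + q * qint q h * ?Q h w"
  proof -
    have "q powi (2 - 2 * h) * q powi (h - 2) = q powi (- h)"
      using q0 by (simp add: power_int_add[symmetric])
    moreover have "q powi (2 - 2 * 0) * q powi -2 = 1"
      using q0 by (simp add: power_int_minus)
    ultimately show ?thesis
      unfolding A1 B qint_succ_mult_q[OF q0 q2] by (simp add: algebra_simps)
  qed
  finally show "star q (Epath q h) (Gt_ser ?m) (X # w)
      = (if h = 0 then Wneg_ser ?m (X # w) else ?Q (h - 1) (X # w))"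
    by (simp add: Qpath_X)
  have "star q (Epath q h) (Wpos_ser ?m) (X # w)
      = qint q (h + 1) * star q (Epath q (h + 1)) (Wpos_ser ?m) w"
    by (simp add: star_Epath_X lquot_Wpos_ser_X)
  also have "\<dots> = - (q powi (h - 2) * (q * qint q (h + 1) * ?Q (h + 1) w))"
    unfolding B1 using q0 by (simp add: power_int_diff power2_eq_square field_simps)
  finally show "star q (Epath q h) (Wpos_ser ?m) (X # w)
      = (if h = 0 then q powi -2 * G_ser ?m (X # w) else 0) - q powi (h - 2) * ?Q h (X # w)"
    by (simp add: Qpath_X)
qed

lemma Epath_Gt_ser_eqs_Y:
  assumes q0: "q \<noteq> 0" and q2: "q ^ 2 \<noteq> 1" and IH: "Epath_Gt_ser_eqs q w"
  shows "Epath_Gt_ser_eqs q (Y # w)"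
  unfolding Epath_Gt_ser_eqs_def
proof (intro allI impI conjI)
  fix h :: int
  assume h: "0 \<le> h"
  let ?m = "- inverse q"
  let ?Q = "Qpath q q"
  show "star q (Epath q h) (Gt_ser ?m) (Y # w)
      = (if h = 0 then Wneg_ser ?m (Y # w) else ?Q (h - 1) (Y # w))"
  proof (cases "h = 0")
    case False
    with h IH have "star q (Epath q (h - 1)) (Gt_ser ?m) w
        = (if h = 1 then Wneg_ser ?m w else ?Q (h - 2) w)"
      by (simp add: Epath_Gt_ser_eqs_def)
    with False show ?thesis
      by (simp add: star_Epath_Y lquot_Gt_ser_Y Qpath_Y)
  qed (simp add: star_Epath_Y lquot_Gt_ser_Y Epath_minus_one)
  have B: "star q (Epath q h) (Wpos_ser ?m) (Y # w)
      = qint q (h - 1) * star q (Epath q (h - 1)) (Wpos_ser ?m) w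
        + q powi (2 * h - 2) * (?m * star q (Epath q h) (Gt_ser ?m) w)"
    by (simp only: star_Epath_Y lquot_Wpos_ser_Y star_smul_right)
  show "star q (Epath q h) (Wpos_ser ?m) (Y # w)
      = (if h = 0 then q powi -2 * G_ser ?m (Y # w) else 0) - q powi (h - 2) * ?Q h (Y # w)"
  proof (cases "h = 0")
    case True
    from this B IH show ?thesis
      by (simp add: Epath_minus_one Epath_Gt_ser_eqs_def Qpath_Y)
  next
    case False
    with h IH have A0: "star q (Epath q h) (Gt_ser ?m) w = ?Q (h - 1) w"
      and B1: "qint q (h - 1) * star q (Epath q (h - 1)) (Wpos_ser ?m) w
        = - (qint q (h - 1) * q powi (h - 3) * ?Q (h - 1) w)"
      by (auto simp: Epath_Gt_ser_eqs_def)
    have "star q (Epath q h) (Wpos_ser ?m) (Y # w)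
        = - ((q powi (h - 3) * qint q (h - 1) + q powi (2 * h - 3)) * ?Q (h - 1) w)"
      unfolding B A0 B1 using q0 by (simp add: power_int_diff field_simps power_Suc[symmetric])
    also have "\<dots> = - (q powi (h - 2) * (qint q h * ?Q (h - 1) w))"
      by (simp add: power_int_mult_qint_pred_inverse_q[OF q0 q2])
    finally show ?thesis
      using False by (simp add: Qpath_Y)
  qed
qed

lemma Epath_0_star_Gt_ser:
  assumes "q \<noteq> 0" "q ^ 2 \<noteq> 1"
  shows "star q (Epath q 0) (Gt_ser (- inverse q)) = Wneg_ser (- inverse q)"
proof
  fix w
  have "Epath_Gt_ser_eqs q w"
  proof (induction w)
    case (Cons c w)
    then show ?case
      by (cases c) (simp_all add: Epath_Gt_ser_eqs_X Epath_Gt_ser_eqs_Y assms)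
  qed (rule Epath_Gt_ser_eqs_Nil)
  then show "star q (Epath q 0) (Gt_ser (- inverse q)) w = Wneg_ser (- inverse q) w"
    by (simp add: Epath_Gt_ser_eqs_def)
qed

lemma sum_bar_nth_eq_height_take:
  "i \<le> length u \<Longrightarrow> (\<Sum>j<i. bar (u ! j)) = height (take i u)"
  by (induction i) (simp_all add: take_Suc_conv_app_nth)

lemma prod_qint_height_take:
  "(\<Prod>i\<le>length u. qint q (h + height (take i u))) = qint q h * Eweight q h u"
proof (induction u arbitrary: h)
  case (Cons c u)
  have "(\<Prod>i\<le>length (c # u). qint q (h + height (take i (c # u))))
      = qint q h * (\<Prod>i\<le>length u. qint q ((h + bar c) + height (take i u)))"
    by (simp add: prod.atMost_Suc_shift algebra_simps del: prod.atMost_Suc)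
  then show ?case
    using Cons.IH by simp
qed simp

lemma Cn_eq_Eweight:
  assumes "q \<noteq> 0" "q ^ 2 \<noteq> (1 :: 'a::field)"
  shows "Cn q n u = (if length u = 2 * n \<and> height u = 0 then Eweight q 1 u else 0)"
proof -
  have prod_eq: "(\<Prod>i\<le>2 * n. qint q (1 + (\<Sum>j<i. bar (u ! j)))) = Eweight q 1 u"
    if "length u = 2 * n"
  proof -
    have "(\<Prod>i\<le>2 * n. qint q (1 + (\<Sum>j<i. bar (u ! j))))
        = (\<Prod>i\<le>length u. qint q (1 + height (take i u)))"
      using that by (intro prod.cong) (auto simp: sum_bar_nth_eq_height_take)
    then show ?thesis
      using qint_1[OF assms] by (simp add: prod_qint_height_take)
  qed
  show ?thesis
  proof (cases "catalan u")
    case True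
    then have "height u = 0"
      using sum_bar_nth_eq_height_take[of "length u" u] by (simp add: catalan_def)
    with True show ?thesis
      by (simp add: Cn_def prod_eq)
  next
    case not_catalan: False
    show ?thesis
    proof (cases "length u = 2 * n \<and> height u = 0")
      case True
      with not_catalan obtain i where i: "1 \<le> i" "i \<le> length u - 1" "(\<Sum>j<i. bar (u ! j)) < 0"
        using sum_bar_nth_eq_height_take[of "length u" u] unfolding catalan_def by force
      then have "Eweight q 1 u = 0"
        using sum_bar_nth_eq_height_take[of i u]
        by (intro Eweight_to_nonpositive[of 1 i]) auto
      with not_catalan show ?thesis
        by (simp add: Cn_def)
    qed (use not_catalan in \<open>auto simp: Cn_def\<close>)
  qed
qed

lemma lcat_X_Cn:
  assumes "q \<noteq> 0" "q ^ 2 \<noteq> (1 :: 'a::field)"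
  shows "lcat X (Cn q n) w = (if count_list w Y = n then Epath q 0 w else 0)"
proof (cases w)
  case (Cons c u)
  show ?thesis
  proof (cases c)
    case X
    have "length u = 2 * n \<and> height u = 0 \<longleftrightarrow> count_list u Y = n \<and> height u = 0"
      using height_eq_length_count[of u] by auto
    with Cons X show ?thesis
      using qint_1[OF assms] by (auto simp: lcat_def Epath_def Cn_eq_Eweight[OF assms])
  next
    case Y
    have "Eweight q (-1) u = 0" if "-1 + height u = 1"
      using that by (intro Eweight_from_negative) auto
    with Cons Y show ?thesis
      by (auto simp: lcat_def Epath_def)
  qed
qed (simp add: lcat_def Epath_def)

lemma lcat_X_Cn_eq_smul:
  assumes "q \<noteq> 0" "q ^ 2 \<noteq> (1 :: 'a::field)"
    and "\<And>w. count_list w Y = n \<Longrightarrow> Epath q 0 w = c * F w"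
    and "\<And>w. count_list w Y \<noteq> n \<Longrightarrow> F w = 0"
  shows "lcat X (Cn q n) = smul c F"
  using assms by (simp add: fun_eq_iff smul_def lcat_X_Cn[OF assms(1,2)])
section \<open>Grading by the number of letters y\<close>

lemma count_Y_eq_sum_list: "int (count_list u Y) = (\<Sum>c\<leftarrow>u. if c = Y then 1 else 0)"
  by (induction u) auto

lemma qsh_nonzero_count_Y: "qsh q u v w \<noteq> 0 \<Longrightarrow> count_list w Y = count_list u Y + count_list v Y"
  using qsh_nonzero_sum_list[of q u v w "\<lambda>c. if c = Y then 1 else 0 :: int"]
  by (simp add: count_Y_eq_sum_list[symmetric])

lemma qsh_nonzero_height: "qsh q u v w \<noteq> 0 \<Longrightarrow> height w = height u + height v"
  using qsh_nonzero_sum_list[of q u v w bar] by (simp add: height_def)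

definition homogeneous :: "nat \<Rightarrow> int \<Rightarrow> 'a::field vec \<Rightarrow> bool" where
  "homogeneous k h f \<longleftrightarrow> (\<forall>u. f u \<noteq> 0 \<longrightarrow> count_list u Y = k \<and> height u = h)"

lemma homogeneous_star:
  assumes "homogeneous k h f" "homogeneous k' h' g"
  shows "homogeneous (k + k') (h + h') (star q f g)"
  unfolding homogeneous_def
proof (intro allI impI)
  fix w
  assume "star q f g w \<noteq> 0"
  then obtain u v where "f u * g v * qsh q u v w \<noteq> 0"
    unfolding star_def by (meson sum.not_neutral_contains_not_neutral)
  then show "count_list w Y = k + k' \<and> height w = h + h'"
    using assms qsh_nonzero_count_Y[of q u v w] qsh_nonzero_height[of q u v w]
    unfolding homogeneous_def by auto
qed

lemma homogeneous_wd_Nil: "homogeneous 0 0 (wd [])"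
  and homogeneous_Gt: "homogeneous k 0 (Gt k)"
  and homogeneous_Wneg: "homogeneous k 1 (Wneg k)"
  by (auto simp: homogeneous_def wd_def Gt_def Wneg_def count_alt height_alt)

definition component :: "nat \<Rightarrow> 'a::field vec \<Rightarrow> 'a vec" where
  "component k f = (\<lambda>u. if count_list u Y = k then f u else 0)"

lemma star_eq_sum_components:
  "star q f g w = (\<Sum>k\<le>count_list w Y. star q (component k f) (component (count_list w Y - k) g) w)"
proof -
  let ?N = "count_list w Y"
  have "f u * g v * qsh q u v w
      = (\<Sum>k\<le>?N. component k f u * component (?N - k) g v * qsh q u v w)" for u v
  proof (cases "qsh q u v w = 0")
    case False
    then have "?N = count_list u Y + count_list v Y"
      by (rule qsh_nonzero_count_Y)
    then show ?thesis
      by (simp add: component_def if_distrib[of "\<lambda>x. x * _"] sum.delta cong: if_cong)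
  qed simp
  then show ?thesis
    by (simp add: star_def sum.swap[of _ "{..?N}"] sum_distrib_right)
qed

text \<open>For F k of y-degree k this encodes the formal power series sum of the m^k F k, with m
  a scalar.\<close>
definition gen_series :: "'a::field \<Rightarrow> (nat \<Rightarrow> 'a vec) \<Rightarrow> 'a vec" where
  "gen_series m F = (\<lambda>u. m ^ count_list u Y * F (count_list u Y) u)"

lemma component_gen_series:
  "homogeneous k h (F k) \<Longrightarrow> component k (gen_series m F) = (\<lambda>u. m ^ k * F k u)"
  by (auto simp: component_def gen_series_def fun_eq_iff homogeneous_def)

lemma star_gen_series:
  assumes "\<And>k. homogeneous k h (F k)" "\<And>k. homogeneous k h' (G k)"
  shows "star q (gen_series m F) (gen_series m G) w
    = m ^ count_list w Y * (\<Sum>k\<le>count_list w Y. star q (F k) (G (count_list w Y - k)) w)"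
proof -
  let ?N = "count_list w Y"
  have "star q (component k (gen_series m F)) (component (?N - k) (gen_series m G)) w
      = m ^ ?N * star q (F k) (G (?N - k)) w" if "k \<le> ?N" for k
  proof -
    have "m ^ k * m ^ (?N - k) = m ^ ?N"
      using that by (simp add: power_add[symmetric])
    then show ?thesis
      by (simp add: component_gen_series[OF assms(1)] component_gen_series[OF assms(2)]
          star_smul_left star_smul_right mult.assoc[symmetric])
  qed
  then show ?thesis
    by (simp add: star_eq_sum_components[of q "gen_series m F"] sum_distrib_left)
qed

lemma Gt_ser_eq_gen_series: "Gt_ser m = gen_series m Gt"
proof
  fix u
  have "even (length u) \<and> u = alt X (length u) \<longleftrightarrow> u = alt X (2 * count_list u Y)"
    by (metis count_alt length_alt dvd_mult_div_cancel dvd_triv_left)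
  then show "Gt_ser m u = gen_series m Gt u"
    by (simp add: Gt_ser_def gen_series_def Gt_def wd_def)
qed

lemma Wneg_ser_eq_gen_series: "Wneg_ser m = gen_series m Wneg"
proof
  fix u
  have "odd (length u) \<and> u = alt X (length u) \<longleftrightarrow> u = alt X (2 * count_list u Y + 1)"
    by (metis count_alt length_alt odd_two_times_div_two_succ even_add odd_one dvd_triv_left)
  then show "Wneg_ser m u = gen_series m Wneg u"
    by (simp add: Wneg_ser_def gen_series_def Wneg_def wd_def)
qed

lemma alt_snoc: "alt c (Suc n) = alt c n @ [if even n then c else swap_letter c]"
proof (induction n arbitrary: c)
  case (Suc n)
  have "alt c (Suc (Suc n)) = c # alt (swap_letter c) (Suc n)"
    by (rule alt_Suc)
  also have "\<dots> = alt c (Suc n) @ [if even (Suc n) then c else swap_letter c]"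
    unfolding Suc.IH[of "swap_letter c"] by (simp add: alt_Suc[of c n])
  finally show ?case .
qed (simp add: alt_Suc)

lemma rev_swap_alt: "rev_swap (alt c n) = alt (if even n then c else swap_letter c) n"
proof (induction n arbitrary: c)
  case (Suc n)
  have "rev_swap (alt c (Suc n)) = rev_swap (alt (swap_letter c) n) @ [swap_letter c]"
    by (simp add: alt_Suc)
  also have "\<dots> = alt (if even (Suc n) then c else swap_letter c) (Suc n)"
    unfolding Suc.IH by (simp add: alt_snoc)
  finally show ?case .
qed simp

lemma rev_swap_vec_Gt: "rev_swap_vec (Gt k) = Gt k"
  and rev_swap_vec_Wneg: "rev_swap_vec (Wneg k) = Wpos k"
  by (simp_all only: Gt_def Wneg_def Wpos_def rev_swap_vec_wd rev_swap_alt even_add even_mult_iff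
      even_numeral odd_one simp_thms if_True if_False swap_letter.simps)

lemma height_rev_swap: "height (rev_swap u) = - height u"
  by (induction u) (simp_all add: bar_swap_letter)

lemma Eweight_snoc: "Eweight q h (u @ [c]) = Eweight q h u * qint q (h + height u + bar c)"
  by (induction u arbitrary: h) (simp_all add: algebra_simps)

text \<open>Both sides are the product of the q-integers of all heights of the path, traversed in
  opposite directions.\<close>
lemma Eweight_rev_swap:
  "qint q (h + height u) * Eweight q (h + height u) (rev_swap u) = qint q h * Eweight q h u"
proof (induction u arbitrary: h)
  case (Cons c u)
  from Cons.IH[of "h + bar c"] show ?case
    by (simp add: Eweight_snoc height_rev_swap bar_swap_letter algebra_simps)
qed simp

lemma rev_swap_vec_Cn:
  assumes "q \<noteq> 0" "q ^ 2 \<noteq> (1 :: 'a::field)"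
  shows "rev_swap_vec (Cn q n) = Cn q n"
proof
  fix u
  have "Eweight q 1 (rev_swap u) = Eweight q 1 u" if "height u = 0"
    using Eweight_rev_swap[of q 1 u] that qint_1[OF assms] by simp
  then show "rev_swap_vec (Cn q n) u = Cn q n u"
    by (simp add: rev_swap_vec_def Cn_eq_Eweight[OF assms] height_rev_swap)
qed

lemma rcat_Y_eq_lcat_X_rev_swap: "rcat f Y w = lcat X (rev_swap_vec f) (rev_swap w)"
proof (cases w rule: rev_exhaust)
  case (snoc v c)
  then show ?thesis
    by (cases c) (auto simp: rcat_def lcat_def rev_swap_vec_def rev_swap_append)
qed (simp add: rcat_def lcat_def)

lemma count_Y_rev_swap: "count_list (rev_swap u) Y = length u - count_list u Y"
proof (induction u)
  case (Cons c u)
  then show ?case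
    using count_le_length[of u Y] by (cases c) (auto simp: Suc_diff_le)
qed simp

lemma homogeneous_rev_swap_vec:
  assumes "homogeneous k 0 f"
  shows "homogeneous k 0 (rev_swap_vec f)"
  unfolding homogeneous_def rev_swap_vec_def
proof (intro allI impI)
  fix u
  assume "f (rev_swap u) \<noteq> 0"
  with assms have "length u - count_list u Y = k" "height u = 0"
    by (auto simp: homogeneous_def count_Y_rev_swap height_rev_swap)
  then show "count_list u Y = k \<and> height u = 0"
    using height_eq_length_count[of u] by linarith
qed

section \<open>The series of the D k inverts the series of the Gt k\<close>

lemma sum_atMost_diff_swap: "(\<Sum>k\<le>n. f k (n - k)) = (\<Sum>i\<le>(n::nat). f (n - i) i)"
  by (rule sum.reindex_bij_witness[where i = "\<lambda>i. n - i" and j = "\<lambda>i. n - i"]) auto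

context
  fixes q :: "'a::field" and D :: "nat \<Rightarrow> 'a vec"
  assumes q_nz: "q \<noteq> 0"
    and D_0: "D 0 = wd []"
    and D_conv: "\<And>n w. 1 \<le> n \<Longrightarrow> (\<Sum>i\<le>n. star q (D i) (Gt (n - i)) w) = 0"
begin

lemma D_eq_minus_sum: "1 \<le> n \<Longrightarrow> D n w = - (\<Sum>i<n. star q (D i) (Gt (n - i)) w)"
  using D_conv[of n w]
  by (simp add: lessThan_Suc_atMost[symmetric] Gt_def star_wd_Nil_right eq_neg_iff_add_eq_0 add.commute)

lemma homogeneous_D: "homogeneous k 0 (D k)"
proof (induction k rule: less_induct)
  case (less k)
  show ?case
  proof (cases "k = 0")
    case False
    show ?thesis
      unfolding homogeneous_def
    proof (intro allI impI)
      fix u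
      assume "D k u \<noteq> 0"
      with False obtain i where i: "i < k" "star q (D i) (Gt (k - i)) u \<noteq> 0"
        using D_eq_minus_sum[of k u] by (auto intro: sum.not_neutral_contains_not_neutral)
      have "homogeneous (i + (k - i)) (0 + 0) (star q (D i) (Gt (k - i)))"
        by (rule homogeneous_star[OF less.IH[OF i(1)] homogeneous_Gt])
      with i show "count_list u Y = k \<and> height u = 0"
        unfolding homogeneous_def by auto
    qed
  qed (simp add: D_0 homogeneous_wd_Nil)
qed

lemma D_ser_star_Gt_ser: "star q (gen_series m D) (Gt_ser m) = wd []"
proof
  fix w
  let ?N = "count_list w Y"
  have "star q (gen_series m D) (Gt_ser m) w = m ^ ?N * (\<Sum>k\<le>?N. star q (D k) (Gt (?N - k)) w)"
    unfolding Gt_ser_eq_gen_series by (rule star_gen_series[OF homogeneous_D homogeneous_Gt])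
  also have "\<dots> = wd [] w"
  proof (cases "?N = 0")
    case False
    then have "w \<noteq> []"
      by auto
    with False show ?thesis
      using D_conv[of ?N w] by (simp add: wd_def)
  qed (simp add: D_0 Gt_def star_wd_Nil_left)
  finally show "star q (gen_series m D) (Gt_ser m) w = wd [] w" .
qed

lemma Gt_ser_star_rev_swap_D_ser:
  "star q (Gt_ser m) (gen_series m (\<lambda>k. rev_swap_vec (D k))) = wd []"
proof
  fix w
  let ?N = "count_list w Y"
  have "star q (Gt_ser m) (gen_series m (\<lambda>k. rev_swap_vec (D k))) w
      = m ^ ?N * (\<Sum>k\<le>?N. star q (Gt k) (rev_swap_vec (D (?N - k))) w)"
    unfolding Gt_ser_eq_gen_series
    by (rule star_gen_series[OF homogeneous_Gt homogeneous_rev_swap_vec[OF homogeneous_D]])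
  also have "\<dots> = m ^ ?N * (\<Sum>i\<le>?N. star q (D i) (Gt (?N - i)) (rev_swap w))"
    using sum_atMost_diff_swap[of "\<lambda>k i. star q (Gt k) (rev_swap_vec (D i)) w" ?N]
    by (simp add: star_rev_swap[OF q_nz] rev_swap_vec_Gt)
  also have "\<dots> = wd [] w"
  proof (cases "?N = 0")
    case False
    then have "w \<noteq> []"
      by auto
    with False show ?thesis
      using D_conv[of ?N "rev_swap w"] by (simp add: wd_def)
  qed (simp add: D_0 Gt_def star_wd_Nil_left, simp add: wd_def rev_swap_eq_iff)
  finally show "star q (Gt_ser m) (gen_series m (\<lambda>k. rev_swap_vec (D k))) w = wd [] w" .
qed

text \<open>A left and a right inverse of Gt_ser m coincide, so the D k are fixed by the
  anti-automorphism and the series of the D k is a two-sided inverse.\<close>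
lemma gen_series_rev_swap_D: "gen_series m (\<lambda>k. rev_swap_vec (D k)) = gen_series m D"
proof -
  have "gen_series m (\<lambda>k. rev_swap_vec (D k))
      = star q (star q (gen_series m D) (Gt_ser m)) (gen_series m (\<lambda>k. rev_swap_vec (D k)))"
    by (simp add: D_ser_star_Gt_ser star_wd_Nil_left)
  also have "\<dots> = gen_series m D"
    by (simp add: star_assoc[OF q_nz] Gt_ser_star_rev_swap_D_ser star_wd_Nil_right)
  finally show ?thesis .
qed

lemma Gt_ser_star_D_ser: "star q (Gt_ser m) (gen_series m D) = wd []"
  using Gt_ser_star_rev_swap_D_ser gen_series_rev_swap_D by simp

lemma rev_swap_vec_D: "rev_swap_vec (D k) = D k"
proof
  fix u
  show "rev_swap_vec (D k) u = D k u"
  proof (cases "count_list u Y = k")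
    case True
    then show ?thesis
      using fun_cong[OF gen_series_rev_swap_D[of 1], of u] by (simp add: gen_series_def)
  next
    case False
    then show ?thesis
      using homogeneous_D[of k] homogeneous_rev_swap_vec[OF homogeneous_D[of k]]
      by (simp add: homogeneous_def) metis
  qed
qed

lemma Epath_0_eq_D_ser_star_Wneg_ser:
  assumes "q ^ 2 \<noteq> 1"
  shows "Epath q 0 = star q (gen_series (-q) D) (Wneg_ser (-q))"
  by (simp add: Gt_ser_star_Epath_0[OF q_nz assms, symmetric] star_assoc[OF q_nz, symmetric]
      D_ser_star_Gt_ser star_wd_Nil_left)

lemma Epath_0_eq_Wneg_ser_star_D_ser:
  assumes "q ^ 2 \<noteq> 1"
  shows "Epath q 0 = star q (Wneg_ser (- inverse q)) (gen_series (- inverse q) D)"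
  by (simp add: Epath_0_star_Gt_ser[OF q_nz assms, symmetric] star_assoc[OF q_nz]
      Gt_ser_star_D_ser star_wd_Nil_right)

lemma lcat_X_Cn_eq_Wneg_star_D:
  assumes "q ^ 2 \<noteq> 1"
  shows "lcat X (Cn q n) = smul ((-1) ^ n * q powi (- int n))
    (\<lambda>w. \<Sum>i\<le>n. star q (Wneg i) (D (n - i)) w)"
proof (rule lcat_X_Cn_eq_smul[OF q_nz assms])
  fix w
  assume "count_list w Y = n"
  then have "Epath q 0 w = (- inverse q) ^ n * (\<Sum>i\<le>n. star q (Wneg i) (D (n - i)) w)"
    by (simp add: Epath_0_eq_Wneg_ser_star_D_ser[OF assms] Wneg_ser_eq_gen_series
        star_gen_series[OF homogeneous_Wneg homogeneous_D])
  then show "Epath q 0 w = (-1) ^ n * q powi (- int n) * (\<Sum>i\<le>n. star q (Wneg i) (D (n - i)) w)"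
    by (simp add: power_minus[of "inverse q"] power_int_minus power_inverse)
next
  fix w
  assume "count_list w Y \<noteq> n"
  then have "star q (Wneg i) (D (n - i)) w = 0" if "i \<le> n" for i
    using homogeneous_star[OF homogeneous_Wneg[of i] homogeneous_D[of "n - i"], of q] that
    by (auto simp: homogeneous_def)
  then show "(\<Sum>i\<le>n. star q (Wneg i) (D (n - i)) w) = 0"
    by simp
qed

lemma lcat_X_Cn_eq_D_star_Wneg:
  assumes "q ^ 2 \<noteq> 1"
  shows "lcat X (Cn q n) = smul ((-1) ^ n * q powi int n)
    (\<lambda>w. \<Sum>i\<le>n. star q (D (n - i)) (Wneg i) w)"
proof (rule lcat_X_Cn_eq_smul[OF q_nz assms])
  fix w
  assume "count_list w Y = n"
  then have "Epath q 0 w = (-q) ^ n * (\<Sum>i\<le>n. star q (D (n - i)) (Wneg i) w)"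
    using sum_atMost_diff_swap[of "\<lambda>k i. star q (D k) (Wneg i) w" n]
    by (simp add: Epath_0_eq_D_ser_star_Wneg_ser[OF assms] Wneg_ser_eq_gen_series
        star_gen_series[OF homogeneous_D homogeneous_Wneg])
  then show "Epath q 0 w = (-1) ^ n * q powi int n * (\<Sum>i\<le>n. star q (D (n - i)) (Wneg i) w)"
    by (simp add: power_minus[of q])
next
  fix w
  assume "count_list w Y \<noteq> n"
  then have "star q (D (n - i)) (Wneg i) w = 0" if "i \<le> n" for i
    using homogeneous_star[OF homogeneous_D[of "n - i"] homogeneous_Wneg[of i], of q] that
    by (auto simp: homogeneous_def)
  then show "(\<Sum>i\<le>n. star q (D (n - i)) (Wneg i) w) = 0"
    by simp
qed

lemma rcat_Cn_Y_eq_D_star_Wpos: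
  assumes "q ^ 2 \<noteq> 1"
  shows "rcat (Cn q n) Y = smul ((-1) ^ n * q powi (- int n))
    (\<lambda>w. \<Sum>i\<le>n. star q (D (n - i)) (Wpos i) w)"
  by (simp add: fun_eq_iff rcat_Y_eq_lcat_X_rev_swap rev_swap_vec_Cn[OF q_nz assms]
      lcat_X_Cn_eq_Wneg_star_D[OF assms] smul_def star_rev_swap[OF q_nz]
      rev_swap_vec_D rev_swap_vec_Wneg)

lemma rcat_Cn_Y_eq_Wpos_star_D:
  assumes "q ^ 2 \<noteq> 1"
  shows "rcat (Cn q n) Y = smul ((-1) ^ n * q powi int n)
    (\<lambda>w. \<Sum>i\<le>n. star q (Wpos i) (D (n - i)) w)"
  by (simp add: fun_eq_iff rcat_Y_eq_lcat_X_rev_swap rev_swap_vec_Cn[OF q_nz assms]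
      lcat_X_Cn_eq_D_star_Wneg[OF assms] smul_def star_rev_swap[OF q_nz]
      rev_swap_vec_D rev_swap_vec_Wneg)

end

theorem theorem11p3:
  fixes q :: "'a::field" and D :: "nat \<Rightarrow> 'a vec"
  assumes q_nz: "q \<noteq> 0"
    and q_not_root: "\<forall>m::nat. m > 0 \<longrightarrow> q ^ m \<noteq> 1"
    and D0: "D 0 = wd []"
    and Drec: "\<forall>n\<ge>1. (\<lambda>w. \<Sum>i\<le>n. star q (D i) (Gt (n - i)) w) = (\<lambda>w. 0)"
  shows "\<forall>n::nat.
     lcat X (Cn q n) = smul ((-1) ^ n * q powi (- int n))
                          (\<lambda>w. \<Sum>i\<le>n. star q (Wneg i) (D (n - i)) w)
   \<and> lcat X (Cn q n) = smul ((-1) ^ n * q powi (int n))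
                          (\<lambda>w. \<Sum>i\<le>n. star q (D (n - i)) (Wneg i) w)
   \<and> rcat (Cn q n) Y = smul ((-1) ^ n * q powi (- int n))
                          (\<lambda>w. \<Sum>i\<le>n. star q (D (n - i)) (Wpos i) w)
   \<and> rcat (Cn q n) Y = smul ((-1) ^ n * q powi (int n))
                          (\<lambda>w. \<Sum>i\<le>n. star q (Wpos i) (D (n - i)) w)"
proof -
  have q_sq: "q ^ 2 \<noteq> 1"
    using q_not_root by simp
  have D_conv: "(\<Sum>i\<le>n. star q (D i) (Gt (n - i)) w) = 0" if "1 \<le> n" for n w
    using Drec that by (simp add: fun_eq_iff)
  note facts = q_nz D0 D_conv q_sq
  show ?thesis
    using lcat_X_Cn_eq_Wneg_star_D[OF facts] lcat_X_Cn_eq_D_star_Wneg[OF facts]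
      rcat_Cn_Y_eq_D_star_Wpos[OF facts] rcat_Cn_Y_eq_Wpos_star_D[OF facts]
    by blast
qed

end
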